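(* Let $i\in\mathbb Z_{\ge0}$, $J\in\mathbb Z_{>0}$, $j\in\mathbb Z$. If $j<0$ or $j>J$ then $W_J(i,j;i+j,0\mid v,\lambda)=0$. If $0\le j\le J$ then $$W_J(i,j;i+j,0\mid v,\lambda)=f(2\eta)^j\frac{[2\eta J]_J}{[2\eta(J-j)]_{J-j}[2\eta j]_j}\frac{[\lambda+2\eta(i+j)]_{J-j}}{[\eta\Lambda-v]_J}\cdot\frac{[v+\lambda+2\eta(i+2j-1)-\eta\Lambda]_j\,[\eta\Lambda-2\eta(i+j)-v]_{J-j}}{[\lambda+2\eta j]_{J-j}\,[\lambda+2\eta(2j-J-1)]_j}.$$
   Context: Fix $\eta,\tau\in\mathbb C$, $\operatorname{Im}\tau>0$. $f(z)$ denotes either $\theta(z)=-\sum_{j\in\mathbb Z}\exp\big(\pi\mathbf i\tau(j+\tfrac12)^2+2\pi\mathbf i(j+\tfrac12)(z+\tfrac12)\big)$ or $\sin(\pi z)$. Elliptic Pochhammer: $[a]_k=\prod_{m=0}^{k-1}f(a-2\eta m)$ for $k\ge0$, $[a]_k=\prod_{m=1}^{-k}f(a+2\eta m)^{-1}$ for $k<0$. Unfused weights ($k\ge0$): $W_1(k,0;k,0\mid v,\lambda,\Lambda)=\frac{f(\eta(\Lambda-2k)-v)f(\lambda+2k\eta)}{f(\eta\Lambda-v)f(\lambda)}$, $W_1(k,1;k+1,0\mid\cdot)=\frac{f(v+\lambda+\eta(2k+2-\Lambda))f(2\eta)}{f(\eta\Lambda-v)f(\lambda)}$, $W_1(k,0;k-1,1\mid\cdot)=\frac{f(\lambda-v+\eta(2k-2-\Lambda))f(2\eta(\Lambda+1-k))f(2k\eta)}{f(\eta\Lambda-v)f(\lambda)f(2\eta)}$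 ($k\ge1$), $W_1(k,1;k,1\mid\cdot)=\frac{f(\eta(2k-\Lambda)-v)f(\lambda+2\eta(k-\Lambda))}{f(\eta\Lambda-v)f(\lambda)}$, and $0$ otherwise. Column weights: for $\mathcal J_1=(j_{1,k})_{k=1}^J,\mathcal J_2=(j_{2,k})_{k=1}^J\in\{0,1\}^J$, $i^{(1)}=i_1$, $i^{(k+1)}=i^{(k)}+j_{1,k}-j_{2,k}$, $\Phi_J=\lambda$, $\Phi_k=\Phi_{k+1}\mp2\eta$ according as $j_{1,k+1}=0$ or $1$; $W_J(i_1,\mathcal J_1;i_2,\mathcal J_2\mid v,\lambda)=\prod_{k=1}^JW_1(i^{(k)},j_{1,k};i^{(k+1)},j_{2,k}\mid v+2\eta(k-1),\Phi_k,\Lambda)$ if all $i^{(k)}\ge0$ and $i^{(J+1)}=i_2$, else $0$. Fused weight: $W_J(i_1,j_1;i_2,j_2\mid v,\lambda)=\sum_{|\mathcal J_1|=j_1}W_J(i_1,\mathcal J_1;i_2,\mathcal K\mid v,\lambda)$ for any $\mathcal K$ with $|\mathcal K|=j_2$ (independent of $\mathcal K$); $\Lambda$ is suppressed. *)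

theory Defs
  imports "HOL-Analysis.Analysis"
begin

definition theta :: "complex \<Rightarrow> complex \<Rightarrow> complex" where
  "theta \<tau> z = - infsum (\<lambda>j::int. exp (pi * \<i> * \<tau> * (of_int j + 1/2)^2
                     + 2 * pi * \<i> * (of_int j + 1/2) * (z + 1/2))) UNIV"

definition epoch :: "(complex \<Rightarrow> complex) \<Rightarrow> complex \<Rightarrow> complex \<Rightarrow> int \<Rightarrow> complex" where
  "epoch f \<eta> a k =
     (if k \<ge> 0 then (\<Prod>m<nat k. f (a - 2 * \<eta> * of_nat m))
      else (\<Prod>m\<in>{1..nat (-k)}. inverse (f (a + 2 * \<eta> * of_nat m))))"

definition W1 :: "(complex \<Rightarrow> complex) \<Rightarrow> complex \<Rightarrow> complex \<Rightarrow>
    int \<Rightarrow> nat \<Rightarrow> int \<Rightarrow> nat \<Rightarrow> complex \<Rightarrow> complex \<Rightarrow> complex" where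
  "W1 f \<eta> Lam k j1 k2 j2 v lam =
    (let kk = (of_int k :: complex); D = f (\<eta> * Lam - v) * f lam in
     if k \<ge> 0 then
       (if j1 = 0 \<and> k2 = k \<and> j2 = 0 then
          f (\<eta> * (Lam - 2 * kk) - v) * f (lam + 2 * kk * \<eta>) / D
        else if j1 = 1 \<and> k2 = k + 1 \<and> j2 = 0 then
          f (v + lam + \<eta> * (2 * kk + 2 - Lam)) * f (2 * \<eta>) / D
        else if j1 = 0 \<and> k2 = k - 1 \<and> j2 = 1 \<and> k \<ge> 1 then
          f (lam - v + \<eta> * (2 * kk - 2 - Lam)) * f (2 * \<eta> * (Lam + 1 - kk)) * f (2 * kk * \<eta>)
            / (D * f (2 * \<eta>))
        else if j1 = 1 \<and> k2 = k \<and> j2 = 1 then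
          f (\<eta> * (2 * kk - Lam) - v) * f (lam + 2 * \<eta> * (kk - Lam)) / D
        else 0)
     else 0)"

text \<open>Column data, 0-indexed: istate i1 A B n is i^(n+1) of the paper,
  Phi eta lam J A n is Phi_(n+1) of the paper (A = J_1, B = J_2 as lists).\<close>
definition istate :: "int \<Rightarrow> nat list \<Rightarrow> nat list \<Rightarrow> nat \<Rightarrow> int" where
  "istate i1 A B n = i1 + (\<Sum>m<n. int (A ! m) - int (B ! m))"

definition Phi :: "complex \<Rightarrow> complex \<Rightarrow> nat \<Rightarrow> nat list \<Rightarrow> nat \<Rightarrow> complex" where
  "Phi \<eta> lam J A n = lam + (\<Sum>m\<in>{n+1..<J}. (if A ! m = 0 then - 2 * \<eta> else 2 * \<eta>))"

definition Wcol :: "(complex \<Rightarrow> complex) \<Rightarrow> complex \<Rightarrow> complex \<Rightarrow> nat \<Rightarrow>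
    int \<Rightarrow> nat list \<Rightarrow> int \<Rightarrow> nat list \<Rightarrow> complex \<Rightarrow> complex \<Rightarrow> complex" where
  "Wcol f \<eta> Lam J i1 A i2 B v lam =
    (if (\<forall>n\<le>J. istate i1 A B n \<ge> 0) \<and> istate i1 A B J = i2 then
       (\<Prod>n<J. W1 f \<eta> Lam (istate i1 A B n) (A ! n) (istate i1 A B (Suc n)) (B ! n)
                 (v + 2 * \<eta> * of_nat n) (Phi \<eta> lam J A n))
     else 0)"

definition bseqs :: "nat \<Rightarrow> int \<Rightarrow> nat list set" where
  "bseqs J s = {xs. length xs = J \<and> set xs \<subseteq> {0, 1} \<and> int (sum_list xs) = s}"

text \<open>A fixed representative K with |K| = j2 (the fused weight is independent of the choice).\<close>
definition Kstd :: "nat \<Rightarrow> int \<Rightarrow> nat list" where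
  "Kstd J j2 = replicate (J - nat j2) 0 @ replicate (nat j2) 1"

definition Wfused :: "(complex \<Rightarrow> complex) \<Rightarrow> complex \<Rightarrow> complex \<Rightarrow> nat \<Rightarrow>
    int \<Rightarrow> int \<Rightarrow> int \<Rightarrow> int \<Rightarrow> complex \<Rightarrow> complex \<Rightarrow> complex" where
  "Wfused f \<eta> Lam J i1 j1 i2 j2 v lam =
    (\<Sum>A\<in>bseqs J j1. Wcol f \<eta> Lam J i1 A i2 (Kstd J j2) v lam)"

end

theory Submission
  imports Defs
begin

(* Because the exit word is 0...0, only the weights W_1(k,0;k,0) and W_1(k,1;k+1,0) occur, so
   W_J(i,j;i+j,0) is a sum over 0-1 words with j ones of products of these two weights.
   Conditioning on the first letter gives a recurrence in the numbers n of ones and r of zeros,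
   with the spectral parameter shifted by 2 eta.  The closed form obeys the same recurrence:
   once the elliptic Pochhammer symbols of the three closed forms involved are reduced to a
   common core, the recurrence is a single instance of the three-term identity
     f(x1+x3) f(x1-x3) f(x2+x4) f(x2-x4) + f(x1+x2) f(x1-x2) f(x4+x3) f(x4-x3)
       = f(x1+x4) f(x1-x4) f(x2+x3) f(x2-x3).
   This identity holds for every odd f with an addition formula
   f(x+y) f(x-y) = P(x) Q(y) - Q(x) P(y).  For sin(pi z) this is elementary; for theta it comes
   from splitting the double series of theta(x+y) theta(x-y) by the parity of the sum of the
   two summation indices. *)

section \<open>Theta series\<close>

lemma summable_exp_quadratic_nat:
  fixes b c d :: real
  assumes c: "c < 0"
  shows "summable (\<lambda>m::nat. exp (c * real m ^ 2 + b * real m + d))"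
proof (rule summable_comparison_test')
  show "summable (\<lambda>m::nat. exp d * exp (-1) ^ m)"
    by (intro summable_mult summable_geometric) auto
  define N where "N = nat \<lceil>\<bar>b + 1\<bar> / (- c)\<rceil>"
  show "norm (exp (c * real m ^ 2 + b * real m + d)) \<le> exp d * exp (-1) ^ m" if "m \<ge> N" for m
  proof -
    have "real m \<ge> \<bar>b + 1\<bar> / (- c)"
      using that unfolding N_def by linarith
    then have "- c * real m \<ge> \<bar>b + 1\<bar>"
      using c by (simp add: field_simps)
    then have "real m * (c * real m + (b + 1)) \<le> 0"
      by (intro mult_nonneg_nonpos) linarith+
    then have "exp (c * real m ^ 2 + b * real m + d) \<le> exp (d - real m)"
      by (simp add: algebra_simps power2_eq_square)
    also have "\<dots> = exp d * exp (-1) ^ m"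
      by (simp add: exp_diff exp_minus exp_of_nat_mult [symmetric] field_simps)
    finally show ?thesis by simp
  qed
qed

lemma summable_on_exp_quadratic_int:
  fixes b c d :: real
  assumes c: "c < 0"
  shows "(\<lambda>n::int. exp (c * of_int n ^ 2 + b * of_int n + d)) summable_on UNIV"
proof -
  define g where "g n = exp (c * of_int n ^ 2 + b * of_int n + d)" for n :: int
  have nonneg: "g summable_on range int"
  proof -
    have "(g \<circ> int) summable_on UNIV"
      using summable_exp_quadratic_nat [OF c, of b d]
      by (subst summable_on_UNIV_nonneg_real_iff) (auto simp: g_def o_def)
    then show ?thesis by (subst summable_on_reindex) auto
  qed
  have neg: "g summable_on range (\<lambda>m. - int m - 1)"
  proof -
    have "summable (\<lambda>m::nat. exp (c * real m ^ 2 + (2 * c - b) * real m + (c - b + d)))"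
      by (rule summable_exp_quadratic_nat [OF c])
    moreover have "c * real m ^ 2 + (2 * c - b) * real m + (c - b + d)
        = c * of_int (- int m - 1) ^ 2 + b * of_int (- int m - 1) + d" for m
      by (simp add: algebra_simps power2_eq_square)
    ultimately have "(g \<circ> (\<lambda>m. - int m - 1)) summable_on UNIV"
      by (subst summable_on_UNIV_nonneg_real_iff) (auto simp: g_def o_def)
    then show ?thesis by (subst summable_on_reindex) (auto simp: inj_on_def)
  qed
  have cover: "(UNIV :: int set) = range int \<union> range (\<lambda>m. - int m - 1)"
  proof -
    have "x \<in> range int \<union> range (\<lambda>m. - int m - 1)" for x :: int
    proof (cases "x \<ge> 0")
      case True
      then show ?thesis by (metis UnI1 nonneg_int_cases rangeI)
    next
      case False
      then have "x = - int (nat (- x - 1)) - 1" by simp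
      then show ?thesis by blast
    qed
    then show ?thesis by blast
  qed
  show ?thesis
    using summable_on_union [OF nonneg neg] cover unfolding g_def by simp
qed

lemma infsum_product_complex:
  fixes f g :: "'a \<Rightarrow> complex"
  assumes "countable A" "countable B" "f summable_on A" "g summable_on B"
  shows "(\<lambda>(x, y). f x * g y) summable_on A \<times> B"
    and "infsum (\<lambda>(x, y). f x * g y) (A \<times> B) = infsum f A * infsum g B"
proof -
  have f: "Infinite_Set_Sum.abs_summable_on f A" and g: "Infinite_Set_Sum.abs_summable_on g B"
    using assms(3,4) summable_on_iff_abs_summable_on_complex abs_summable_equivalent by blast+
  have fg: "Infinite_Set_Sum.abs_summable_on (\<lambda>(x, y). f x * g y) (A \<times> B)"
    by (rule abs_summable_on_product [OF assms(1,2) f g])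
  then show "(\<lambda>(x, y). f x * g y) summable_on A \<times> B"
    using summable_on_iff_abs_summable_on_complex abs_summable_equivalent by blast
  show "infsum (\<lambda>(x, y). f x * g y) (A \<times> B) = infsum f A * infsum g B"
    using infsetsum_product [OF assms(1,2) f g] infsetsum_infsum [OF fg] infsetsum_infsum [OF f]
      infsetsum_infsum [OF g] by simp
qed

definition theta_term :: "complex \<Rightarrow> real \<Rightarrow> complex \<Rightarrow> int \<Rightarrow> complex" where
  "theta_term \<tau> s w n =
     exp (pi * \<i> * \<tau> * (of_int n + of_real s)\<^sup>2 + 2 * pi * \<i> * (of_int n + of_real s) * w)"

lemma theta_term_summable:
  assumes "Im \<tau> > 0"
  shows "theta_term \<tau> s w summable_on UNIV"
proof -
  have norm_eq: "norm (theta_term \<tau> s w n)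
      = exp (- pi * Im \<tau> * of_int n ^ 2 + (- 2 * pi * Im \<tau> * s - 2 * pi * Im w) * of_int n
             + (- pi * Im \<tau> * s\<^sup>2 - 2 * pi * s * Im w))" for n
  proof -
    have "of_int n + complex_of_real s = complex_of_real (of_int n + s)" by simp
    then show ?thesis
      unfolding theta_term_def norm_exp_eq_Re by (simp add: power2_eq_square algebra_simps)
  qed
  have "- pi * Im \<tau> < 0"
    using assms by simp
  then have "(\<lambda>n. norm (theta_term \<tau> s w n)) summable_on UNIV"
    unfolding norm_eq by (rule summable_on_exp_quadratic_int)
  then show ?thesis
    using summable_on_iff_abs_summable_on_complex by blast
qed

lemma theta_eq_infsum_theta_term: "theta \<tau> z = - infsum (theta_term \<tau> (1/2) (z + 1/2)) UNIV"
  unfolding theta_def theta_term_def by simp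

lemma theta_term_product_odd:
  "theta_term \<tau> (1/2) (x + y + 1/2) (m + l) * theta_term \<tau> (1/2) (x - y + 1/2) (m - l - 1)
   = theta_term (2 * \<tau>) 0 (2 * x) m * theta_term (2 * \<tau>) (1/2) (2 * y) l"
proof -
  have "theta_term \<tau> (1/2) (x + y + 1/2) (m + l) * theta_term \<tau> (1/2) (x - y + 1/2) (m - l - 1)
      = exp ((pi * \<i> * (2 * \<tau>) * (of_int m + of_real 0)\<^sup>2 + 2 * pi * \<i> * (of_int m + of_real 0) * (2 * x)
        + (pi * \<i> * (2 * \<tau>) * (of_int l + of_real (1/2))\<^sup>2
           + 2 * pi * \<i> * (of_int l + of_real (1/2)) * (2 * y)))
         + \<i> * (of_int m * (of_real pi * 2)))"
    unfolding theta_term_def exp_add [symmetric]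
    by (rule arg_cong [where f = exp]) (simp add: algebra_simps power2_eq_square)
  also have "\<dots> = theta_term (2 * \<tau>) 0 (2 * x) m * theta_term (2 * \<tau>) (1/2) (2 * y) l"
    unfolding exp_plus_2pin theta_term_def exp_add by simp
  finally show ?thesis .
qed

lemma theta_term_product_even:
  "theta_term \<tau> (1/2) (x + y + 1/2) (m + l) * theta_term \<tau> (1/2) (x - y + 1/2) (m - l)
   = - (theta_term (2 * \<tau>) (1/2) (2 * x) m * theta_term (2 * \<tau>) 0 (2 * y) l)"
proof -
  have "theta_term \<tau> (1/2) (x + y + 1/2) (m + l) * theta_term \<tau> (1/2) (x - y + 1/2) (m - l)
      = exp (((pi * \<i> * (2 * \<tau>) * (of_int m + of_real (1/2))\<^sup>2
               + 2 * pi * \<i> * (of_int m + of_real (1/2)) * (2 * x)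
        + (pi * \<i> * (2 * \<tau>) * (of_int l + of_real 0)\<^sup>2 + 2 * pi * \<i> * (of_int l + of_real 0) * (2 * y)))
         + \<i> * (of_int m * (of_real pi * 2))) + of_real pi * \<i>)"
    unfolding theta_term_def exp_add [symmetric]
    by (rule arg_cong [where f = exp]) (simp add: algebra_simps power2_eq_square)
  also have "\<dots> = - (theta_term (2 * \<tau>) (1/2) (2 * x) m * theta_term (2 * \<tau>) 0 (2 * y) l)"
    unfolding exp_add [of _ "of_real pi * \<i>"] exp_plus_2pin exp_pi_i
    unfolding theta_term_def exp_add by simp
  finally show ?thesis .
qed

lemma int_pairs_parity_split:
  defines "odd_pair \<equiv> \<lambda>(m::int, l::int). (m + l, m - l - 1)"
    and "even_pair \<equiv> \<lambda>(m::int, l::int). (m + l, m - l)"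
  shows "inj odd_pair" and "inj even_pair" and "range odd_pair \<inter> range even_pair = {}"
    and "range odd_pair \<union> range even_pair = UNIV"
proof -
  show "inj odd_pair" "inj even_pair"
    unfolding odd_pair_def even_pair_def inj_on_def by auto
  have "odd_pair p \<noteq> even_pair q" for p q
  proof -
    have "odd (fst (odd_pair p) + snd (odd_pair p))" "even (fst (even_pair q) + snd (even_pair q))"
      unfolding odd_pair_def even_pair_def by (cases p; cases q; simp)+
    then show ?thesis by metis
  qed
  then show "range odd_pair \<inter> range even_pair = {}"
    by blast
  have "(j, k) \<in> range odd_pair \<union> range even_pair" for j k
  proof (cases "even (j + k)")
    case True
    then obtain m where "j + k = 2 * m" by (blast elim: evenE)
    then have "even_pair (m, j - m) = (j, k)" unfolding even_pair_def by simp
    then show ?thesis by (metis UnI2 rangeI)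
  next
    case False
    then obtain m where "j + k + 1 = 2 * m" by (metis even_plus_one_iff evenE)
    then have "odd_pair (m, j - m) = (j, k)" unfolding odd_pair_def by simp
    then show ?thesis by (metis UnI1 rangeI)
  qed
  then show "range odd_pair \<union> range even_pair = UNIV" by auto
qed

lemma theta_mult_theta:
  assumes "Im \<tau> > 0"
  shows "theta \<tau> (x + y) * theta \<tau> (x - y)
    = infsum (theta_term (2 * \<tau>) 0 (2 * x)) UNIV * infsum (theta_term (2 * \<tau>) (1/2) (2 * y)) UNIV
    - infsum (theta_term (2 * \<tau>) (1/2) (2 * x)) UNIV * infsum (theta_term (2 * \<tau>) 0 (2 * y)) UNIV"
proof -
  have summable: "theta_term \<tau> s w summable_on UNIV" "theta_term (2 * \<tau>) s w summable_on UNIV" for s w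
    using assms by (auto intro: theta_term_summable)
  have product: "infsum (\<lambda>(m, l). g m * h l) UNIV = infsum g UNIV * infsum h UNIV"
    if "g summable_on UNIV" "h summable_on UNIV" for g h :: "int \<Rightarrow> complex"
    using infsum_product_complex(2) [OF _ _ that] by simp
  define T where "T = (\<lambda>(j, k). theta_term \<tau> (1/2) (x + y + 1/2) j * theta_term \<tau> (1/2) (x - y + 1/2) k)"
  define odd_pair where "odd_pair = (\<lambda>(m::int, l::int). (m + l, m - l - 1))"
  define even_pair where "even_pair = (\<lambda>(m::int, l::int). (m + l, m - l))"
  note split = int_pairs_parity_split [folded odd_pair_def even_pair_def]
  have "T summable_on UNIV \<times> UNIV"
    unfolding T_def by (rule infsum_product_complex(1)) (simp_all add: summable)
  then have odd_summable: "T summable_on range odd_pair" and even_summable: "T summable_on range even_pair"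
    by (rule summable_on_subset_banach; simp)+
  have "theta \<tau> (x + y) * theta \<tau> (x - y) = infsum T UNIV"
    unfolding T_def theta_eq_infsum_theta_term
    by (subst product) (auto intro: summable simp: add.assoc add_diff_eq diff_add_eq)
  also have "\<dots> = infsum T (range odd_pair) + infsum T (range even_pair)"
    using infsum_Un_disjoint [OF odd_summable even_summable split(3)] split(4) by metis
  also have "infsum T (range odd_pair) = infsum (T \<circ> odd_pair) UNIV"
    by (rule infsum_reindex [OF split(1)])
  also have "T \<circ> odd_pair = (\<lambda>(m, l). theta_term (2 * \<tau>) 0 (2 * x) m * theta_term (2 * \<tau>) (1/2) (2 * y) l)"
    unfolding T_def odd_pair_def by (auto simp: theta_term_product_odd)
  also have "infsum \<dots> UNIV
      = infsum (theta_term (2 * \<tau>) 0 (2 * x)) UNIV * infsum (theta_term (2 * \<tau>) (1/2) (2 * y)) UNIV"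
    by (rule product) (rule summable)+
  also have "infsum T (range even_pair) = infsum (T \<circ> even_pair) UNIV"
    by (rule infsum_reindex [OF split(2)])
  also have "T \<circ> even_pair
      = (\<lambda>p. - (\<lambda>(m, l). theta_term (2 * \<tau>) (1/2) (2 * x) m * theta_term (2 * \<tau>) 0 (2 * y) l) p)"
    unfolding T_def even_pair_def by (auto simp: theta_term_product_even)
  also have "infsum \<dots> UNIV
      = - (infsum (theta_term (2 * \<tau>) (1/2) (2 * x)) UNIV * infsum (theta_term (2 * \<tau>) 0 (2 * y)) UNIV)"
    unfolding infsum_uminus by (subst product) (simp_all add: summable)
  finally show ?thesis by simp
qed

lemma theta_minus: "theta \<tau> (- z) = - theta \<tau> z"
proof -
  have reflect: "bij_betw (\<lambda>j::int. - 1 - j) UNIV UNIV"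
    by (rule bij_betwI [where g = "\<lambda>j::int. - 1 - j"]) auto
  have term_reflect: "theta_term \<tau> (1/2) (- z + 1/2) (- 1 - j) = - theta_term \<tau> (1/2) (z + 1/2) j" for j
  proof -
    have "theta_term \<tau> (1/2) (- z + 1/2) (- 1 - j)
        = exp ((pi * \<i> * \<tau> * (of_int j + of_real (1/2))\<^sup>2
          + 2 * pi * \<i> * (of_int j + of_real (1/2)) * (z + 1/2)
           + \<i> * (of_int (- j - 1) * (of_real pi * 2))) + of_real pi * \<i>)"
      unfolding theta_term_def
      by (rule arg_cong [where f = exp]) (simp add: algebra_simps power2_eq_square)
    also have "\<dots> = - theta_term \<tau> (1/2) (z + 1/2) j"
      unfolding exp_add [of _ "of_real pi * \<i>"] exp_plus_2pin exp_pi_i theta_term_def by simp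
    finally show ?thesis .
  qed
  have "infsum (theta_term \<tau> (1/2) (- z + 1/2)) UNIV
      = infsum (\<lambda>j. theta_term \<tau> (1/2) (- z + 1/2) (- 1 - j)) UNIV"
    by (rule infsum_reindex_bij_betw [OF reflect, symmetric])
  also have "\<dots> = - infsum (theta_term \<tau> (1/2) (z + 1/2)) UNIV"
    by (simp only: term_reflect infsum_uminus)
  finally show ?thesis
    unfolding theta_eq_infsum_theta_term by simp
qed

section \<open>Functions of theta type\<close>

definition theta_type :: "(complex \<Rightarrow> complex) \<Rightarrow> bool" where
  "theta_type f \<longleftrightarrow> (\<forall>z. f (- z) = - f z) \<and>
     (\<forall>x1 x2 x3 x4. f (x1 + x3) * f (x1 - x3) * (f (x2 + x4) * f (x2 - x4))
        + f (x1 + x2) * f (x1 - x2) * (f (x4 + x3) * f (x4 - x3))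
      = f (x1 + x4) * f (x1 - x4) * (f (x2 + x3) * f (x2 - x3)))"

lemma theta_typeI:
  assumes "\<And>z. f (- z) = - f z" and "\<And>x y. f (x + y) * f (x - y) = P x * Q y - Q x * P y"
  shows "theta_type f"
  unfolding theta_type_def assms(2) using assms(1) by (simp add: algebra_simps)

lemma theta_type_theta:
  assumes "Im \<tau> > 0"
  shows "theta_type (theta \<tau>)"
  by (rule theta_typeI [where P = "\<lambda>x. infsum (theta_term (2 * \<tau>) 0 (2 * x)) UNIV"
      and Q = "\<lambda>y. infsum (theta_term (2 * \<tau>) (1/2) (2 * y)) UNIV"])
    (simp_all add: theta_minus theta_mult_theta [OF assms])

lemma theta_type_sin: "theta_type (\<lambda>z. sin (of_real pi * z))"
proof (rule theta_typeI [where P = "\<lambda>x. sin (of_real pi * x) ^ 2" and Q = "\<lambda>_. 1"])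
  fix x y :: complex
  let ?a = "of_real pi * x" and ?b = "of_real pi * y"
  have "sin (of_real pi * (x + y)) * sin (of_real pi * (x - y)) = sin (?a + ?b) * sin (?a - ?b)"
    by (simp add: algebra_simps)
  also have "\<dots> = (sin ?a * cos ?b)\<^sup>2 - (cos ?a * sin ?b)\<^sup>2"
    unfolding sin_add sin_diff by (simp add: algebra_simps power2_eq_square)
  also have "\<dots> = (sin ?a)\<^sup>2 * 1 - 1 * (sin ?b)\<^sup>2"
    unfolding power_mult_distrib cos_squared_eq by (simp add: algebra_simps)
  finally show "sin (of_real pi * (x + y)) * sin (of_real pi * (x - y))
      = sin (of_real pi * x) ^ 2 * 1 - 1 * sin (of_real pi * y) ^ 2" .
qed simp

section \<open>Column weights with exit word zero\<close>

lemma W1_zero_zero: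
  "W1 f \<eta> Lam (int i) 0 (int i) 0 v \<Phi>
   = f (\<eta> * (Lam - 2 * of_nat i) - v) * f (\<Phi> + 2 * of_nat i * \<eta>) / (f (\<eta> * Lam - v) * f \<Phi>)"
  unfolding W1_def by (simp add: Let_def)

lemma W1_one_zero:
  "W1 f \<eta> Lam (int i) 1 (int i + 1) 0 v \<Phi>
   = f (v + \<Phi> + \<eta> * (2 * of_nat i + 2 - Lam)) * f (2 * \<eta>) / (f (\<eta> * Lam - v) * f \<Phi>)"
  unfolding W1_def by (simp add: Let_def)

lemma Phi_Cons_Suc: "Phi \<eta> lam (Suc J) (x # A) (Suc n) = Phi \<eta> lam J A n"
proof -
  have "(\<Sum>m\<in>{Suc n + 1..<Suc J}. if (x # A) ! m = 0 then - 2 * \<eta> else 2 * \<eta>)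
      = (\<Sum>m\<in>{n + 1..<J}. if A ! m = 0 then - 2 * \<eta> else 2 * \<eta>)"
    unfolding add_Suc Suc_eq_plus1 [symmetric] by (simp only: sum.shift_bounds_Suc_ivl) simp
  then show ?thesis
    unfolding Phi_def by simp
qed

lemma Phi_Cons_0:
  assumes "set A \<subseteq> {0, 1}"
  shows "Phi \<eta> lam (Suc (length A)) (x # A) 0 = lam + 2 * \<eta> * (2 * of_nat (sum_list A) - of_nat (length A))"
proof -
  have "(\<Sum>m<length A. if A ! m = 0 then - 2 * \<eta> else 2 * \<eta>)
      = 2 * \<eta> * (2 * of_nat (sum_list A) - of_nat (length A))"
    using assms
  proof (induction A)
    case (Cons y A)
    then have "y = 0 \<or> y = 1" by auto
    then show ?case
      using Cons unfolding length_Cons sum.lessThan_Suc_shift by (auto simp: algebra_simps)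
  qed simp
  moreover have "(\<Sum>m\<in>{Suc 0..<Suc (length A)}. if (x # A) ! m = 0 then - 2 * \<eta> else 2 * \<eta>)
      = (\<Sum>m<length A. if A ! m = 0 then - 2 * \<eta> else 2 * \<eta>)"
    by (simp only: sum.shift_bounds_Suc_ivl) (simp add: atLeast0LessThan)
  ultimately show ?thesis
    unfolding Phi_def by simp
qed

lemma finite_bseqs: "finite (bseqs J j)"
proof -
  have "bseqs J j \<subseteq> {xs. set xs \<subseteq> {0, 1} \<and> length xs = J}"
    unfolding bseqs_def by auto
  then show ?thesis
    using finite_lists_length_eq [of "{0::nat, 1}" J] finite_subset by blast
qed

lemma bseqs_empty:
  assumes "j < 0 \<or> j > int J"
  shows "bseqs J j = {}"
proof -
  have "sum_list xs \<le> length xs" if "set xs \<subseteq> {0, 1}" for xs :: "nat list"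
    using that by (induction xs) auto
  then show ?thesis
    using assms unfolding bseqs_def by fastforce
qed

lemma bseqs_0: "bseqs 0 0 = {[]}"
  unfolding bseqs_def by auto

lemma bseqs_Suc: "bseqs (Suc J) j = Cons 0 ` bseqs J j \<union> Cons 1 ` bseqs J (j - 1)"
proof -
  have "xs \<in> bseqs (Suc J) j \<longleftrightarrow> xs \<in> Cons 0 ` bseqs J j \<union> Cons 1 ` bseqs J (j - 1)" for xs
  proof
    assume "xs \<in> bseqs (Suc J) j"
    then obtain y ys where "xs = y # ys" "length ys = J"
      "set (y # ys) \<subseteq> {0, 1}" "int (sum_list (y # ys)) = j"
      unfolding bseqs_def by (auto simp: length_Suc_conv)
    then show "xs \<in> Cons 0 ` bseqs J j \<union> Cons 1 ` bseqs J (j - 1)"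
      unfolding bseqs_def by auto
  qed (auto simp: bseqs_def)
  then show ?thesis by blast
qed

lemma sum_bseqs_Suc:
  "(\<Sum>A\<in>bseqs (Suc J) j. g A) = (\<Sum>A\<in>bseqs J j. g (0 # A)) + (\<Sum>A\<in>bseqs J (j - 1). g (1 # A))"
  unfolding bseqs_Suc
  by (subst sum.union_disjoint) (auto simp: finite_bseqs sum.reindex inj_on_def)

locale fused_weights =
  fixes f :: "complex \<Rightarrow> complex" and \<eta> Lam lam :: complex
begin

fun column :: "nat \<Rightarrow> nat list \<Rightarrow> complex \<Rightarrow> complex" where
  "column i [] v = 1"
| "column i (x # A) v =
     W1 f \<eta> Lam (int i) x (int i + int x) 0 v (lam + 2 * \<eta> * (2 * of_nat (sum_list A) - of_nat (length A)))
     * column (i + x) A (v + 2 * \<eta>)"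

lemma column_eq_prod:
  assumes "set A \<subseteq> {0, 1}"
  shows "column i A v = (\<Prod>n<length A. W1 f \<eta> Lam (int i + int (\<Sum>m<n. A ! m)) (A ! n)
           (int i + int (\<Sum>m<Suc n. A ! m)) 0 (v + 2 * \<eta> * of_nat n) (Phi \<eta> lam (length A) A n))"
  using assms
proof (induction A arbitrary: i v)
  case Nil
  then show ?case by simp
next
  case (Cons x A)
  then show ?case
    unfolding length_Cons prod.lessThan_Suc_shift sum.lessThan_Suc_shift
    by (simp add: Phi_Cons_Suc Phi_Cons_0 algebra_simps)
qed

lemma Wcol_eq_column:
  assumes "set A \<subseteq> {0, 1}"
  shows "Wcol f \<eta> Lam (length A) (int i) A (int i + int (sum_list A)) (replicate (length A) 0) v lam
       = column i A v"
proof -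
  have state: "istate (int i) A (replicate (length A) 0) n = int i + int (\<Sum>m<n. A ! m)"
    if "n \<le> length A" for n
    unfolding istate_def using that by (simp add: of_nat_sum)
  have "sum_list A = (\<Sum>m<length A. A ! m)"
    by (simp add: sum_list_sum_nth atLeast0LessThan)
  then have "(\<forall>n\<le>length A. istate (int i) A (replicate (length A) 0) n \<ge> 0)
      \<and> istate (int i) A (replicate (length A) 0) (length A) = int i + int (sum_list A)"
    using state by (simp add: sum_nonneg)
  then show ?thesis
    unfolding Wcol_def column_eq_prod [OF assms] by (simp add: state)
qed

text \<open>fused i n r v is the fused weight W_(n+r)(i, n; i + n, 0 | v, lam), computed by
  conditioning on the first entry of the column.\<close>
fun fused :: "nat \<Rightarrow> nat \<Rightarrow> nat \<Rightarrow> complex \<Rightarrow> complex" where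
  "fused i 0 0 v = 1"
| "fused i 0 (Suc r) v =
     W1 f \<eta> Lam (int i) 0 (int i) 0 v (lam - 2 * \<eta> * of_nat r) * fused i 0 r (v + 2 * \<eta>)"
| "fused i (Suc n) 0 v =
     W1 f \<eta> Lam (int i) 1 (int i + 1) 0 v (lam + 2 * \<eta> * of_nat n) * fused (Suc i) n 0 (v + 2 * \<eta>)"
| "fused i (Suc n) (Suc r) v =
     W1 f \<eta> Lam (int i) 0 (int i) 0 v (lam + 2 * \<eta> * (of_nat (Suc n) - of_nat r))
       * fused i (Suc n) r (v + 2 * \<eta>)
   + W1 f \<eta> Lam (int i) 1 (int i + 1) 0 v (lam + 2 * \<eta> * (of_nat n - of_nat (Suc r)))
       * fused (Suc i) n (Suc r) (v + 2 * \<eta>)"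

lemma sum_column_Cons:
  "(\<Sum>A\<in>bseqs J j. column i (x # A) v)
   = W1 f \<eta> Lam (int i) x (int i + int x) 0 v (lam + 2 * \<eta> * (2 * of_int j - of_nat J))
     * (\<Sum>A\<in>bseqs J j. column (i + x) A (v + 2 * \<eta>))"
  unfolding sum_distrib_left by (rule sum.cong) (auto simp: bseqs_def)

lemma sum_column_eq_fused: "(\<Sum>A\<in>bseqs (n + r) (int n). column i A v) = fused i n r v"
proof (induction i n r v rule: fused.induct)
  case (1 i v)
  then show ?case by (simp add: bseqs_0)
next
  case (2 i r v)
  then show ?case by (simp add: sum_bseqs_Suc sum_column_Cons bseqs_empty del: column.simps)
next
  case (3 i n v)
  then show ?case by (simp add: sum_bseqs_Suc sum_column_Cons bseqs_empty del: column.simps)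
next
  case (4 i n r v)
  have "Suc n + r = n + Suc r" by simp
  then show ?case
    using 4 by (simp add: sum_bseqs_Suc sum_column_Cons algebra_simps del: column.simps)
qed

lemma Wfused_eq_fused: "Wfused f \<eta> Lam (n + r) (int i) (int n) (int i + int n) 0 v lam = fused i n r v"
proof -
  have "Wcol f \<eta> Lam (n + r) (int i) A (int i + int n) (Kstd (n + r) 0) v lam = column i A v"
    if "A \<in> bseqs (n + r) (int n)" for A
    using that Wcol_eq_column [of A i v] unfolding bseqs_def Kstd_def by auto
  then show ?thesis
    unfolding Wfused_def sum_column_eq_fused [symmetric] by (rule sum.cong [OF refl])
qed

section \<open>The closed form\<close>

definition poch :: "complex \<Rightarrow> nat \<Rightarrow> complex" where
  "poch x k = (\<Prod>m<k. f (x - 2 * \<eta> * of_nat m))"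

lemma epoch_of_nat: "epoch f \<eta> x (int k) = poch x k"
  unfolding epoch_def poch_def by simp

lemma poch_Suc: "poch x (Suc k) = f x * poch (x - 2 * \<eta>) k"
  unfolding poch_def prod.lessThan_Suc_shift by (simp add: algebra_simps)

lemma poch_Suc': "poch x (Suc k) = poch x k * f (x - 2 * \<eta> * of_nat k)"
  unfolding poch_def by simp

lemma poch_0 [simp]: "poch x 0 = 1"
  unfolding poch_def by simp

lemma poch_shift: "poch x k * f (x - 2 * \<eta> * of_nat k) = f x * poch (x - 2 * \<eta>) k"
  using poch_Suc poch_Suc' by metis

definition weight_num :: "nat \<Rightarrow> nat \<Rightarrow> nat \<Rightarrow> complex \<Rightarrow> complex" where
  "weight_num i n r v = f (2 * \<eta>) ^ n * poch (2 * \<eta> * of_nat (n + r)) (n + r)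
     * poch (lam + 2 * \<eta> * (of_nat i + of_nat n)) r
     * poch (v + lam + 2 * \<eta> * (of_nat i + 2 * of_nat n - 1) - \<eta> * Lam) n
     * poch (\<eta> * Lam - 2 * \<eta> * (of_nat i + of_nat n) - v) r"

definition weight_den :: "nat \<Rightarrow> nat \<Rightarrow> complex \<Rightarrow> complex" where
  "weight_den n r v = poch (2 * \<eta> * of_nat r) r * poch (2 * \<eta> * of_nat n) n
     * poch (\<eta> * Lam - v) (n + r) * poch (lam + 2 * \<eta> * of_nat n) r
     * poch (lam + 2 * \<eta> * (of_nat n - of_nat r - 1)) n"

lemma weight_num_Suc_zeros:
  "weight_num i n (Suc r) v = weight_num i n r v * (f (2 * \<eta> * (of_nat n + of_nat r + 1))
     * f (lam + 2 * \<eta> * (of_nat i + of_nat n - of_nat r))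
     * f (\<eta> * Lam - v - 2 * \<eta> * (of_nat i + of_nat n + of_nat r)))"
  unfolding weight_num_def add_Suc_right poch_Suc[of "2 * \<eta> * _"] poch_Suc'[of "lam + _"]
    poch_Suc'[of "\<eta> * Lam - _ - v"]
  by (simp add: algebra_simps)

lemma weight_num_Suc_ones:
  "weight_num i (Suc n) r v = weight_num (Suc i) n r v * (f (2 * \<eta>) * f (2 * \<eta> * (of_nat n + of_nat r + 1))
     * f (v + lam + 2 * \<eta> * (of_nat i + 2 * of_nat n + 1) - \<eta> * Lam))"
  unfolding weight_num_def add_Suc poch_Suc[of "2 * \<eta> * _"] poch_Suc[of "v + lam + _ - _"]
  by (simp add: algebra_simps)

lemma weight_num_Suc_Suc:
  "weight_num i (Suc n) (Suc r) v = weight_num (Suc i) n r (v + 2 * \<eta>)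
     * (f (2 * \<eta>) * f (2 * \<eta> * (of_nat n + of_nat r + 2)) * f (2 * \<eta> * (of_nat n + of_nat r + 1))
        * f (lam + 2 * \<eta> * (of_nat i + of_nat n + 1 - of_nat r))
        * f (v + lam + 2 * \<eta> * (of_nat i + of_nat n + 1) - \<eta> * Lam)
        * f (\<eta> * Lam - v - 2 * \<eta> * (of_nat i + of_nat n + 1)))"
  unfolding weight_num_def add_Suc add_Suc_right poch_Suc[of "2 * \<eta> * _"] poch_Suc[of "2 * \<eta> * _ - _"]
    poch_Suc'[of "lam + _"]
    poch_Suc'[of "v + lam + _ - _"] poch_Suc[of "\<eta> * Lam - _ - v"]
  by (simp add: algebra_simps)

lemma weight_num_no_ones:
  "weight_num i 0 (Suc r) v = weight_num i 0 r (v + 2 * \<eta>) * (f (2 * \<eta> * (of_nat r + 1))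
     * f (lam + 2 * \<eta> * (of_nat i - of_nat r)) * f (\<eta> * Lam - v - 2 * \<eta> * of_nat i))"
  unfolding weight_num_def add_0 add_0_right poch_Suc[of "2 * \<eta> * _"] poch_Suc'[of "lam + _"]
    poch_Suc[of "\<eta> * Lam - _ - v"]
  by (simp add: algebra_simps)

lemma weight_num_no_zeros:
  "weight_num i (Suc n) 0 v = weight_num (Suc i) n 0 (v + 2 * \<eta>) * (f (2 * \<eta>)
     * f (2 * \<eta> * (of_nat n + 1)) * f (v + lam + 2 * \<eta> * (of_nat i + of_nat n + 1) - \<eta> * Lam))"
  unfolding weight_num_def add_0 add_0_right poch_Suc[of "2 * \<eta> * _"] poch_Suc'[of "v + lam + _ - _"]
  by (simp add: algebra_simps)

lemma weight_den_Suc_zeros: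
  "weight_den n (Suc r) v * f (lam + 2 * \<eta> * (of_nat n - of_nat r - 1))
   = weight_den n r v * (f (2 * \<eta> * (of_nat r + 1)) * f (\<eta> * Lam - v - 2 * \<eta> * (of_nat n + of_nat r))
       * f (lam + 2 * \<eta> * (of_nat n - of_nat r)) * f (lam - 2 * \<eta> * (of_nat r + 1)))"
  using poch_shift[of "lam + 2 * \<eta> * (of_nat n - of_nat r - 1)" n]
  unfolding weight_den_def add_Suc_right poch_Suc[of "2 * \<eta> * _"] poch_Suc'[of "\<eta> * Lam - v"]
    poch_Suc'[of "lam + 2 * \<eta> * of_nat n"]
  by (simp add: algebra_simps)

lemma weight_den_Suc_ones:
  "weight_den (Suc n) r v * f (lam + 2 * \<eta> * (of_nat n - of_nat r + 1))
   = weight_den n r v * (f (2 * \<eta> * (of_nat n + 1)) * f (\<eta> * Lam - v - 2 * \<eta> * (of_nat n + of_nat r))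
       * f (lam + 2 * \<eta> * (of_nat n + 1)) * f (lam + 2 * \<eta> * (of_nat n - of_nat r)))"
  using poch_shift[of "lam + 2 * \<eta> * of_nat (Suc n)" r]
  unfolding weight_den_def add_Suc poch_Suc[of "2 * \<eta> * _"] poch_Suc'[of "\<eta> * Lam - v"]
    poch_Suc[of "lam + 2 * \<eta> * (_ - _ - 1)"]
  by (simp add: algebra_simps)

lemma weight_den_Suc_Suc:
  "weight_den (Suc n) (Suc r) v = weight_den n r (v + 2 * \<eta>)
     * (f (2 * \<eta> * (of_nat r + 1)) * f (2 * \<eta> * (of_nat n + 1)) * f (\<eta> * Lam - v)
        * f (\<eta> * Lam - v - 2 * \<eta> * (of_nat n + of_nat r + 1))
        * f (lam + 2 * \<eta> * (of_nat n + 1)) * f (lam - 2 * \<eta> * (of_nat r + 1)))"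
  unfolding weight_den_def add_Suc add_Suc_right poch_Suc[of "2 * \<eta> * _"] poch_Suc[of "\<eta> * Lam - v"]
    poch_Suc'[of "\<eta> * Lam - v - _"] poch_Suc[of "lam + 2 * \<eta> * of_nat _"]
    poch_Suc'[of "lam + 2 * \<eta> * (_ - _ - 1)"]
  by (simp add: algebra_simps)

lemma weight_den_no_ones:
  "weight_den 0 (Suc r) v = weight_den 0 r (v + 2 * \<eta>)
     * (f (2 * \<eta> * (of_nat r + 1)) * f (\<eta> * Lam - v) * f (lam - 2 * \<eta> * of_nat r))"
  unfolding weight_den_def add_0 poch_Suc[of "2 * \<eta> * _"] poch_Suc[of "\<eta> * Lam - v"]
    poch_Suc'[of "lam + _"]
  by (simp add: algebra_simps)

lemma weight_den_no_zeros:
  "weight_den (Suc n) 0 v = weight_den n 0 (v + 2 * \<eta>)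
     * (f (2 * \<eta> * (of_nat n + 1)) * f (\<eta> * Lam - v) * f (lam + 2 * \<eta> * of_nat n))"
  unfolding weight_den_def add_0_right poch_Suc[of "2 * \<eta> * _"] poch_Suc[of "\<eta> * Lam - v"]
    poch_Suc[of "lam + 2 * \<eta> * (_ - _ - 1)"]
  by (simp add: algebra_simps)

definition nondegenerate :: "nat \<Rightarrow> complex \<Rightarrow> bool" where
  "nondegenerate J v \<longleftrightarrow>
     (\<forall>m::nat. 1 \<le> m \<and> m \<le> J \<longrightarrow> f (2 * \<eta> * of_nat m) \<noteq> 0)
     \<and> (\<forall>n::int. \<bar>n\<bar> \<le> int J \<longrightarrow> f (lam + 2 * \<eta> * of_int n) \<noteq> 0)
     \<and> (\<forall>m::nat. m < J \<longrightarrow> f (\<eta> * Lam - v - 2 * \<eta> * of_nat m) \<noteq> 0)"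

lemma nondegenerateD:
  assumes "nondegenerate J v"
  shows "1 \<le> m \<Longrightarrow> m \<le> J \<Longrightarrow> f (2 * \<eta> * of_nat m) \<noteq> 0"
    and "\<bar>t\<bar> \<le> int J \<Longrightarrow> f (lam + 2 * \<eta> * of_int t) \<noteq> 0"
    and "m < J \<Longrightarrow> f (\<eta> * Lam - v - 2 * \<eta> * of_nat m) \<noteq> 0"
  using assms unfolding nondegenerate_def by blast+

lemma nondegenerate_Suc:
  assumes "nondegenerate (Suc J) v"
  shows "nondegenerate J (v + 2 * \<eta>)"
  unfolding nondegenerate_def
proof (intro conjI allI impI)
  fix m :: nat
  assume "m < J"
  have "\<eta> * Lam - (v + 2 * \<eta>) - 2 * \<eta> * of_nat m = \<eta> * Lam - v - 2 * \<eta> * of_nat (Suc m)"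
    by (simp add: algebra_simps)
  then show "f (\<eta> * Lam - (v + 2 * \<eta>) - 2 * \<eta> * of_nat m) \<noteq> 0"
    using nondegenerateD(3) [OF assms, of "Suc m"] \<open>m < J\<close> by (metis Suc_mono)
qed (use nondegenerateD [OF assms] in auto)

lemma poch_nonzero: "(\<And>m. m < k \<Longrightarrow> f (x - 2 * \<eta> * of_nat m) \<noteq> 0) \<Longrightarrow> poch x k \<noteq> 0"
  unfolding poch_def by (simp add: prod_zero_iff)

lemma poch_eta_nonzero:
  assumes "nondegenerate J v" "k \<le> J"
  shows "poch (2 * \<eta> * of_nat k) k \<noteq> 0"
proof (rule poch_nonzero)
  fix m assume "m < k"
  then have "2 * \<eta> * of_nat k - 2 * \<eta> * of_nat m = 2 * \<eta> * of_nat (k - m)"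
    by (simp add: of_nat_diff algebra_simps)
  then show "f (2 * \<eta> * of_nat k - 2 * \<eta> * of_nat m) \<noteq> 0"
    using nondegenerateD(1) [OF assms(1), of "k - m"] \<open>m < k\<close> assms(2) by simp
qed

lemma poch_lam_nonzero:
  assumes "nondegenerate J v" "\<And>m. m < k \<Longrightarrow> \<bar>t - int m\<bar> \<le> int J"
  shows "poch (lam + 2 * \<eta> * of_int t) k \<noteq> 0"
proof (rule poch_nonzero)
  fix m assume "m < k"
  have "lam + 2 * \<eta> * of_int t - 2 * \<eta> * of_nat m = lam + 2 * \<eta> * of_int (t - int m)"
    by (simp add: algebra_simps)
  then show "f (lam + 2 * \<eta> * of_int t - 2 * \<eta> * of_nat m) \<noteq> 0"
    using nondegenerateD(2) [OF assms(1) assms(2) [OF \<open>m < k\<close>]] by metis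
qed

lemma poch_Lam_nonzero:
  assumes "nondegenerate J v" "k \<le> J"
  shows "poch (\<eta> * Lam - v) k \<noteq> 0"
  by (rule poch_nonzero) (use assms nondegenerateD(3) in auto)

lemma weight_den_nonzero:
  assumes "nondegenerate J v" "n + r \<le> J"
  shows "weight_den n r v \<noteq> 0"
proof -
  have "poch (lam + 2 * \<eta> * of_int (int n)) r \<noteq> 0"
    "poch (lam + 2 * \<eta> * of_int (int n - int r - 1)) n \<noteq> 0"
    using assms(2) by (intro poch_lam_nonzero [OF assms(1)]; linarith)+
  then show ?thesis
    using assms unfolding weight_den_def
    by (simp add: poch_eta_nonzero poch_Lam_nonzero)
qed

text \<open>closed_weight i n r v is the right-hand side of the proposition for J = n + r and j = n.\<close>
definition closed_weight :: "nat \<Rightarrow> nat \<Rightarrow> nat \<Rightarrow> complex \<Rightarrow> complex" where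
  "closed_weight i n r v = weight_num i n r v / weight_den n r v"

lemma closed_weight_Suc_zeros:
  assumes nd: "nondegenerate (n + Suc r) v"
  shows "closed_weight i n (Suc r) v = closed_weight i n r v
    * (f (2 * \<eta> * (of_nat n + of_nat r + 1)) * f (lam + 2 * \<eta> * (of_nat i + of_nat n - of_nat r))
       * f (\<eta> * Lam - v - 2 * \<eta> * (of_nat i + of_nat n + of_nat r))
       * f (lam + 2 * \<eta> * (of_nat n - of_nat r - 1)))
    / (f (2 * \<eta> * (of_nat r + 1)) * f (\<eta> * Lam - v - 2 * \<eta> * (of_nat n + of_nat r))
       * f (lam + 2 * \<eta> * (of_nat n - of_nat r)) * f (lam - 2 * \<eta> * (of_nat r + 1)))"
proof -
  have shift: "f (lam + 2 * \<eta> * (of_nat n - of_nat r - 1)) \<noteq> 0"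
    using nondegenerateD(2) [OF nd, of "int n - int r - 1"] by simp
  have "weight_den n r v \<noteq> 0"
    using nd by (rule weight_den_nonzero) simp
  moreover have "f (2 * \<eta> * of_nat (Suc r)) \<noteq> 0"
    by (rule nondegenerateD(1) [OF nd]) simp_all
  moreover have "f (lam + 2 * \<eta> * of_int (int n - int r)) \<noteq> 0" "f (lam + 2 * \<eta> * of_int (- int r - 1)) \<noteq> 0"
    by (rule nondegenerateD(2) [OF nd]; simp)+
  moreover have "f (\<eta> * Lam - v - 2 * \<eta> * of_nat (n + r)) \<noteq> 0"
    by (rule nondegenerateD(3) [OF nd]) simp
  moreover have "closed_weight i n (Suc r) v = weight_num i n (Suc r) v
    * f (lam + 2 * \<eta> * (of_nat n - of_nat r - 1))
      / (weight_den n (Suc r) v * f (lam + 2 * \<eta> * (of_nat n - of_nat r - 1)))"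
    unfolding closed_weight_def using shift by simp
  ultimately show ?thesis
    unfolding weight_den_Suc_zeros weight_num_Suc_zeros closed_weight_def
      using shift by (simp add: field_simps)
qed

lemma closed_weight_Suc_ones:
  assumes nd: "nondegenerate (Suc n + r) v"
  shows "closed_weight i (Suc n) r v = closed_weight (Suc i) n r v
    * (f (2 * \<eta>) * f (2 * \<eta> * (of_nat n + of_nat r + 1))
       * f (v + lam + 2 * \<eta> * (of_nat i + 2 * of_nat n + 1) - \<eta> * Lam)
       * f (lam + 2 * \<eta> * (of_nat n - of_nat r + 1)))
    / (f (2 * \<eta> * (of_nat n + 1)) * f (\<eta> * Lam - v - 2 * \<eta> * (of_nat n + of_nat r))
       * f (lam + 2 * \<eta> * (of_nat n + 1)) * f (lam + 2 * \<eta> * (of_nat n - of_nat r)))"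
proof -
  have shift: "f (lam + 2 * \<eta> * (of_nat n - of_nat r + 1)) \<noteq> 0"
    using nondegenerateD(2) [OF nd, of "int n - int r + 1"] by simp
  have "weight_den n r v \<noteq> 0"
    using nd by (rule weight_den_nonzero) simp
  moreover have "f (2 * \<eta> * of_nat (Suc n)) \<noteq> 0"
    by (rule nondegenerateD(1) [OF nd]) simp_all
  moreover have "f (lam + 2 * \<eta> * of_int (int n + 1)) \<noteq> 0" "f (lam + 2 * \<eta> * of_int (int n - int r)) \<noteq> 0"
    by (rule nondegenerateD(2) [OF nd]; simp)+
  moreover have "f (\<eta> * Lam - v - 2 * \<eta> * of_nat (n + r)) \<noteq> 0"
    by (rule nondegenerateD(3) [OF nd]) simp
  moreover have "closed_weight i (Suc n) r v = weight_num i (Suc n) r v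
    * f (lam + 2 * \<eta> * (of_nat n - of_nat r + 1))
      / (weight_den (Suc n) r v * f (lam + 2 * \<eta> * (of_nat n - of_nat r + 1)))"
    unfolding closed_weight_def using shift by simp
  ultimately show ?thesis
    unfolding weight_den_Suc_ones weight_num_Suc_ones closed_weight_def
      using shift by (simp add: field_simps)
qed

lemma closed_weight_Suc_Suc:
  assumes nd: "nondegenerate (Suc n + Suc r) v"
  shows "closed_weight i (Suc n) (Suc r) v = closed_weight (Suc i) n r (v + 2 * \<eta>)
    * (f (2 * \<eta>) * f (2 * \<eta> * (of_nat n + of_nat r + 2)) * f (2 * \<eta> * (of_nat n + of_nat r + 1))
       * f (lam + 2 * \<eta> * (of_nat i + of_nat n + 1 - of_nat r))
       * f (v + lam + 2 * \<eta> * (of_nat i + of_nat n + 1) - \<eta> * Lam)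
       * f (\<eta> * Lam - v - 2 * \<eta> * (of_nat i + of_nat n + 1)))
    / (f (2 * \<eta> * (of_nat r + 1)) * f (2 * \<eta> * (of_nat n + 1)) * f (\<eta> * Lam - v)
       * f (\<eta> * Lam - v - 2 * \<eta> * (of_nat n + of_nat r + 1))
       * f (lam + 2 * \<eta> * (of_nat n + 1)) * f (lam - 2 * \<eta> * (of_nat r + 1)))"
proof -
  have "nondegenerate (Suc (Suc n + r)) v"
    using nd by simp
  then have "weight_den n r (v + 2 * \<eta>) \<noteq> 0"
    by (rule weight_den_nonzero [OF nondegenerate_Suc]) simp
  moreover have "f (2 * \<eta> * of_nat (Suc n)) \<noteq> 0" "f (2 * \<eta> * of_nat (Suc r)) \<noteq> 0"
    by (rule nondegenerateD(1) [OF nd]; simp)+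
  moreover have "f (lam + 2 * \<eta> * of_int (int n + 1)) \<noteq> 0" "f (lam + 2 * \<eta> * of_int (- int r - 1)) \<noteq> 0"
    by (rule nondegenerateD(2) [OF nd]; simp)+
  moreover have "f (\<eta> * Lam - v - 2 * \<eta> * of_nat 0) \<noteq> 0"
    "f (\<eta> * Lam - v - 2 * \<eta> * of_nat (Suc (n + r))) \<noteq> 0"
    by (rule nondegenerateD(3) [OF nd]; simp)+
  ultimately show ?thesis
    unfolding closed_weight_def weight_num_Suc_Suc weight_den_Suc_Suc by (simp add: field_simps)
qed

lemma closed_weight_no_ones:
  assumes nd: "nondegenerate (Suc r) v"
  shows "closed_weight i 0 (Suc r) v
    = W1 f \<eta> Lam (int i) 0 (int i) 0 v (lam - 2 * \<eta> * of_nat r) * closed_weight i 0 r (v + 2 * \<eta>)"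
proof -
  have "weight_den 0 r (v + 2 * \<eta>) \<noteq> 0"
    using nondegenerate_Suc [OF nd] by (rule weight_den_nonzero) simp
  moreover have "f (2 * \<eta> * of_nat (Suc r)) \<noteq> 0"
    by (rule nondegenerateD(1) [OF nd]) simp_all
  moreover have "f (lam + 2 * \<eta> * of_int (- int r)) \<noteq> 0"
    by (rule nondegenerateD(2) [OF nd]) simp
  moreover have "f (\<eta> * Lam - v - 2 * \<eta> * of_nat 0) \<noteq> 0"
    by (rule nondegenerateD(3) [OF nd]) simp
  ultimately show ?thesis
    unfolding closed_weight_def weight_num_no_ones weight_den_no_ones W1_zero_zero
      by (simp add: field_simps)
qed

lemma closed_weight_no_zeros:
  assumes nd: "nondegenerate (Suc n) v"
  shows "closed_weight i (Suc n) 0 v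
    = W1 f \<eta> Lam (int i) 1 (int i + 1) 0 v (lam + 2 * \<eta> * of_nat n) * closed_weight (Suc i) n 0 (v + 2 * \<eta>)"
proof -
  have "weight_den n 0 (v + 2 * \<eta>) \<noteq> 0"
    using nondegenerate_Suc [OF nd] by (rule weight_den_nonzero) simp
  moreover have "f (2 * \<eta> * of_nat (Suc n)) \<noteq> 0"
    by (rule nondegenerateD(1) [OF nd]) simp_all
  moreover have "f (lam + 2 * \<eta> * of_int (int n)) \<noteq> 0"
    by (rule nondegenerateD(2) [OF nd]) simp
  moreover have "f (\<eta> * Lam - v - 2 * \<eta> * of_nat 0) \<noteq> 0"
    by (rule nondegenerateD(3) [OF nd]) simp
  ultimately show ?thesis
    unfolding closed_weight_def weight_num_no_zeros weight_den_no_zeros W1_one_zero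
      by (simp add: field_simps)
qed

lemma three_term_step:
  assumes "theta_type f"
  shows "f (2 * \<eta> * (of_nat n + of_nat r + 2)) * f (v + lam + 2 * \<eta> * (of_nat i + of_nat n + 1) - \<eta> * Lam)
      * f (\<eta> * Lam - v - 2 * \<eta> * (of_nat i + of_nat n + 1)) * f (lam + 2 * \<eta> * (of_nat n - of_nat r))
    = f (\<eta> * Lam - v - 2 * \<eta> * of_nat i) * f (v + lam + 2 * \<eta> * (of_nat i + 2 * of_nat n + 2) - \<eta> * Lam)
      * f (2 * \<eta> * (of_nat r + 1)) * f (lam - 2 * \<eta> * (of_nat r + 1))
    + f (v + lam + 2 * \<eta> * (of_nat i + of_nat n - of_nat r) - \<eta> * Lam)
      * f (\<eta> * Lam - v - 2 * \<eta> * (of_nat i + of_nat n + of_nat r + 2))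
      * f (2 * \<eta> * (of_nat n + 1)) * f (lam + 2 * \<eta> * (of_nat n + 1))"
proof -
  have odd: "f (- z) = - f z" for z
    using assms unfolding theta_type_def by blast
  define x1 where "x1 = lam / 2 + 2 * \<eta> * (of_nat n + 1)"
  define x2 where "x2 = lam / 2"
  define x3 where "x3 = lam / 2 - (\<eta> * Lam - v) + 2 * \<eta> * (of_nat i + of_nat n + 1)"
  define x4 where "x4 = 2 * \<eta> * (of_nat r + 1) - lam / 2"
  have "x4 + x3 = - (\<eta> * Lam - v - 2 * \<eta> * (of_nat i + of_nat n + of_nat r + 2))"
    "x4 - x3 = - (v + lam + 2 * \<eta> * (of_nat i + of_nat n - of_nat r) - \<eta> * Lam)"
    unfolding x3_def x4_def by (simp_all add: algebra_simps)
  then have "f (x4 + x3) * f (x4 - x3) = f (\<eta> * Lam - v - 2 * \<eta> * (of_nat i + of_nat n + of_nat r + 2))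
      * f (v + lam + 2 * \<eta> * (of_nat i + of_nat n - of_nat r) - \<eta> * Lam)"
    by (simp only: odd minus_mult_minus)
  moreover have "f (x1 + x3) * f (x1 - x3) * (f (x2 + x4) * f (x2 - x4))
      + f (x1 + x2) * f (x1 - x2) * (f (x4 + x3) * f (x4 - x3))
      = f (x1 + x4) * f (x1 - x4) * (f (x2 + x3) * f (x2 - x3))"
    using assms unfolding theta_type_def by blast
  ultimately show ?thesis
    unfolding x1_def x2_def x3_def x4_def by (simp add: algebra_simps)
qed

lemma closed_weight_recurrence:
  assumes tt: "theta_type f" and nd: "nondegenerate (Suc n + Suc r) v"
  shows "closed_weight i (Suc n) (Suc r) v
    = W1 f \<eta> Lam (int i) 0 (int i) 0 v (lam + 2 * \<eta> * (of_nat (Suc n) - of_nat r))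
        * closed_weight i (Suc n) r (v + 2 * \<eta>)
      + W1 f \<eta> Lam (int i) 1 (int i + 1) 0 v (lam + 2 * \<eta> * (of_nat n - of_nat (Suc r)))
        * closed_weight (Suc i) n (Suc r) (v + 2 * \<eta>)"
    (is "_ = ?rhs")
proof -
  have nd': "nondegenerate (Suc n + r) (v + 2 * \<eta>)" "nondegenerate (n + Suc r) (v + 2 * \<eta>)"
    using nondegenerate_Suc [of "Suc n + r" v] nd by simp_all
  have eta: "f (2 * \<eta> * of_nat (Suc n)) \<noteq> 0" "f (2 * \<eta> * of_nat (Suc r)) \<noteq> 0"
    by (rule nondegenerateD(1) [OF nd]; simp)+
  have lam: "f (lam + 2 * \<eta> * of_int (int n + 1)) \<noteq> 0" "f (lam + 2 * \<eta> * of_int (- int r - 1)) \<noteq> 0"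
    "f (lam + 2 * \<eta> * of_int (int n - int r)) \<noteq> 0"
    "f (lam + 2 * \<eta> * of_int (int n - int r + 1)) \<noteq> 0"
    "f (lam + 2 * \<eta> * of_int (int n - int r - 1)) \<noteq> 0"
    by (rule nondegenerateD(2) [OF nd]; simp)+
  have Lam: "f (\<eta> * Lam - v - 2 * \<eta> * of_nat 0) \<noteq> 0"
    "f (\<eta> * Lam - v - 2 * \<eta> * of_nat (Suc (n + r))) \<noteq> 0"
    by (rule nondegenerateD(3) [OF nd]; simp)+
  note nonzero = eta lam Lam
  define K where "K = closed_weight (Suc i) n r (v + 2 * \<eta>) * f (2 * \<eta>)
      * f (2 * \<eta> * (of_nat n + of_nat r + 1)) * f (lam + 2 * \<eta> * (of_nat i + of_nat n + 1 - of_nat r))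
    / (f (\<eta> * Lam - v) * f (\<eta> * Lam - v - 2 * \<eta> * (of_nat n + of_nat r + 1)))"
  define M where "M = f (2 * \<eta> * (of_nat r + 1)) * f (2 * \<eta> * (of_nat n + 1))
      * f (lam + 2 * \<eta> * (of_nat n + 1)) * f (lam - 2 * \<eta> * (of_nat r + 1))
      * f (lam + 2 * \<eta> * (of_nat n - of_nat r))"
  have "closed_weight i (Suc n) (Suc r) v
      = K * (f (2 * \<eta> * (of_nat n + of_nat r + 2))
          * f (v + lam + 2 * \<eta> * (of_nat i + of_nat n + 1) - \<eta> * Lam)
          * f (\<eta> * Lam - v - 2 * \<eta> * (of_nat i + of_nat n + 1))
          * f (lam + 2 * \<eta> * (of_nat n - of_nat r))) / M"
    unfolding closed_weight_Suc_Suc [OF nd] K_def M_def using nonzero by (simp add: field_simps)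
  also have "\<dots> = K * (f (\<eta> * Lam - v - 2 * \<eta> * of_nat i)
          * f (v + lam + 2 * \<eta> * (of_nat i + 2 * of_nat n + 2) - \<eta> * Lam)
          * f (2 * \<eta> * (of_nat r + 1)) * f (lam - 2 * \<eta> * (of_nat r + 1))
        + f (v + lam + 2 * \<eta> * (of_nat i + of_nat n - of_nat r) - \<eta> * Lam)
          * f (\<eta> * Lam - v - 2 * \<eta> * (of_nat i + of_nat n + of_nat r + 2))
          * f (2 * \<eta> * (of_nat n + 1)) * f (lam + 2 * \<eta> * (of_nat n + 1))) / M"
    by (simp only: three_term_step [OF tt])
  also have "\<dots> = ?rhs"
    unfolding closed_weight_Suc_ones [OF nd'(1)] closed_weight_Suc_zeros [OF nd'(2)]
      W1_zero_zero W1_one_zero K_def M_def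
    using nonzero by (simp add: field_simps)
  finally show ?thesis .
qed

lemma fused_eq_closed_weight:
  assumes "theta_type f" and "nondegenerate (n + r) v"
  shows "fused i n r v = closed_weight i n r v"
  using assms(2)
proof (induction i n r v rule: fused.induct)
  case (1 i v)
  then show ?case by (simp add: closed_weight_def weight_num_def weight_den_def)
next
  case (2 i r v)
  then show ?case
    using closed_weight_no_ones nondegenerate_Suc by simp
next
  case (3 i n v)
  then show ?case
    using closed_weight_no_zeros nondegenerate_Suc by simp
next
  case (4 i n r v)
  then show ?case
    using closed_weight_recurrence [OF assms(1)] nondegenerate_Suc by simp
qed

end

theorem proposition4p3:
  fixes \<eta> \<tau> v lam Lam :: complex and f :: "complex \<Rightarrow> complex"
    and i J :: nat and j :: int
  assumes "Im \<tau> > 0"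
    and "f = theta \<tau> \<or> f = (\<lambda>z::complex. sin (complex_of_real pi * z))"
    and "J > 0"
  shows "((j < 0 \<or> j > int J) \<longrightarrow> Wfused f \<eta> Lam J (int i) j (int i + j) 0 v lam = 0)
   \<and> ((0 \<le> j \<and> j \<le> int J
        \<and> (\<forall>m::nat. 1 \<le> m \<and> m \<le> J \<longrightarrow> f (2 * \<eta> * of_nat m) \<noteq> 0)
        \<and> (\<forall>n::int. \<bar>n\<bar> \<le> int J \<longrightarrow> f (lam + 2 * \<eta> * of_int n) \<noteq> 0)
        \<and> (\<forall>m::nat. m < J \<longrightarrow> f (\<eta> * Lam - v - 2 * \<eta> * of_nat m) \<noteq> 0))
      \<longrightarrow> Wfused f \<eta> Lam J (int i) j (int i + j) 0 v lam
          = f (2 * \<eta>) ^ nat j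
            * epoch f \<eta> (2 * \<eta> * of_nat J) (int J)
              / (epoch f \<eta> (2 * \<eta> * (of_nat J - of_int j)) (int J - j)
                 * epoch f \<eta> (2 * \<eta> * of_int j) j)
            * epoch f \<eta> (lam + 2 * \<eta> * (of_nat i + of_int j)) (int J - j)
              / epoch f \<eta> (\<eta> * Lam - v) (int J)
            * (epoch f \<eta> (v + lam + 2 * \<eta> * (of_nat i + 2 * of_int j - 1) - \<eta> * Lam) j
               * epoch f \<eta> (\<eta> * Lam - 2 * \<eta> * (of_nat i + of_int j) - v) (int J - j))
              / (epoch f \<eta> (lam + 2 * \<eta> * of_int j) (int J - j)
                 * epoch f \<eta> (lam + 2 * \<eta> * (2 * of_int j - of_nat J - 1)) j))"
proof (cases "0 \<le> j \<and> j \<le> int J")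
  case True
  interpret fused_weights f \<eta> Lam lam .
  have tt: "theta_type f"
    using assms(2) theta_type_theta [OF assms(1)] theta_type_sin by auto
  obtain n r where j: "j = int n" and J: "J = n + r"
    using True by (metis le_add_diff_inverse nat_int nat_le_iff nonneg_int_cases)
  have index: "int (n + r) - int n = int r"
    "(2 * of_int (int n) - of_nat (n + r) - 1 :: complex) = of_nat n - of_nat r - 1"
    by simp_all
  show ?thesis
    unfolding j J index epoch_of_nat Wfused_eq_fused nondegenerate_def [symmetric]
    by (simp add: fused_eq_closed_weight [OF tt] closed_weight_def
      weight_num_def weight_den_def mult_ac)
next
  case False
  then show ?thesis
    unfolding Wfused_def by (auto simp: bseqs_empty)
qed

end
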